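(* Let $N,M_s,M_d\ge1$ be integers, $P_s,P_r,\sigma_r^2,\sigma_d^2>0$, $\varepsilon\ge 0$, $\mathbf H_{sr}\in\mathbb C^{N\times M_s}$ and $\tilde{\mathbf H}_{rd}\in\mathbb C^{M_d\times N}$. Consider the problem $$\mathcal P_1:\ \max_{\mathbf W\in\mathbb C^{N\times N},\,\mathbf b\in\mathbb C^{M_s},\,\mathbf r\in\mathbb C^{M_d}}\ \min_{\|\Delta \mathbf H\|_F\leq \varepsilon}\frac{P_s|\mathbf r^H(\tilde {\mathbf H}_{rd}+\Delta \mathbf H)\mathbf W\mathbf H_{sr}\mathbf b|^2}{\sigma_r^2\|\mathbf r^H(\tilde {\mathbf H}_{rd}+\Delta \mathbf H)\mathbf W\|_2^2+\sigma_d^2}$$ subject to $[P_s\mathbf W\mathbf H_{sr}\mathbf b\mathbf b^H\mathbf H_{sr}^H\mathbf W^H+\sigma_r^2\mathbf W\mathbf W^H]_{i,i}\leq P_r$ for $i=1,\dots,N$, $\|\mathbf b\|_2=1$, $\|\mathbf r\|_2=1$ (the minimum being over $\Delta\mathbf H\in\mathbb C^{M_d\times N}$). Let $f^\circ$ be the maximum value and $\mathbf w^\circ$ an optimal solution of $$\max_{\mathbf w\in\mathbb C^N}\ f(\mathbf w)= \|\tilde {\mathbf H}_{rd}\mathbf w\|_2-\varepsilon\|\mathbf w\|_2\quad\text{s.t. } |w_i|\le 1,\ i=1,\dots,N.$$ Then the optimal $(\mathbf W,\mathbf b,\mathbf r)$ of $\mathcal P_1$ are given by $$\mathbf W=\sqrt{\frac{P_r}{\|\mathbf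 H_{sr}\mathbf b\|_2^2(P_s\|\mathbf H_{sr}\mathbf b\|_2^2+\sigma_r^2)}}\,\mathbf w^\circ\mathbf b^{ H}\mathbf H_{sr}^H,\qquad \mathbf b={\bm \nu}(\mathbf H_{sr}^H\mathbf H_{sr}),\qquad \mathbf r=\frac{\tilde {\mathbf H}_{rd}\mathbf w^\circ}{\|\tilde {\mathbf H}_{rd}\mathbf w^\circ\|_2},$$ and the optimal received SNR is $$\text{SNR}=\frac{\tilde P_r^2P_s\|\mathbf H_{sr}\mathbf b\|_2^2\max\{f^\circ, 0\}^2}{\tilde P_r^2\sigma_r^2\max\{f^\circ, 0\}^2+\sigma_d^2},\qquad \tilde P_r=\sqrt{\frac{P_r}{P_s\|\mathbf H_{sr}\mathbf b\|_2^2+\sigma_r^2}}.$$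
   Context: ${\bm \nu}(\mathbf A)$ denotes a unit-norm eigenvector associated with the largest eigenvalue of a Hermitian matrix $\mathbf A$. $[\mathbf A]_{i,i}$ is the $i$-th diagonal entry; $(\cdot)^H$ conjugate transpose; $\|\cdot\|_2$ Euclidean norm; $\|\cdot\|_F$ Frobenius norm; $w_i$ is the $i$-th entry of $\mathbf w$. The setting is a two-hop amplify-and-forward relay: source beamformer $\mathbf b$, relay matrix $\mathbf W$, destination beamformer $\mathbf r$, first-hop channel $\mathbf H_{sr}$, estimated second-hop channel $\tilde{\mathbf H}_{rd}$ with error $\Delta\mathbf H$ bounded by $\varepsilon$, source power $P_s$, per-antenna relay power limit $P_r$, noise variances $\sigma_r^2,\sigma_d^2$. *)

theory Defs
  imports "HOL-Analysis.Analysis"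
begin

text \<open>Complex vectors are \<open>complex ^ 'n\<close>; an m x n complex matrix is
  \<open>complex ^ 'n ^ 'm\<close> (rows indexed by 'm). The library \<open>norm\<close> on vectors is the
  Euclidean 2-norm, and on matrices (vectors of rows) it is the Frobenius norm.\<close>

definition ctrans :: "complex ^ 'n ^ 'm \<Rightarrow> complex ^ 'm ^ 'n" where
  "ctrans A = (\<chi> i j. cnj (A $ j $ i))"

definition vcnj :: "complex ^ 'n \<Rightarrow> complex ^ 'n" where
  "vcnj v = (\<chi> i. cnj (v $ i))"

definition cinner :: "complex ^ 'n \<Rightarrow> complex ^ 'n \<Rightarrow> complex" where
  "cinner r x = (\<Sum>i\<in>UNIV. cnj (r $ i) * x $ i)"

definition outer :: "complex ^ 'm \<Rightarrow> complex ^ 'n \<Rightarrow> complex ^ 'n ^ 'm" where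
  "outer u v = (\<chi> i j. u $ i * cnj (v $ j))"

text \<open>\<open>v\<close> is a unit-norm eigenvector of \<open>A\<close> associated with its largest eigenvalue
  (any admissible choice of \<open>\<nu>(A)\<close>).\<close>
definition is_top_eigvec :: "complex ^ 'n ^ 'n \<Rightarrow> complex ^ 'n \<Rightarrow> bool" where
  "is_top_eigvec A v \<longleftrightarrow> norm v = 1 \<and>
     (\<exists>lam::real. A *v v = complex_of_real lam *s v \<and>
        (\<forall>(\<mu>::complex) u. u \<noteq> 0 \<and> A *v u = \<mu> *s u \<longrightarrow> Re \<mu> \<le> lam))"

definition snr :: "real \<Rightarrow> real \<Rightarrow> real \<Rightarrow> complex ^ 'ms ^ 'n \<Rightarrow> complex ^ 'n ^ 'md
     \<Rightarrow> complex ^ 'n ^ 'n \<Rightarrow> complex ^ 'ms \<Rightarrow> complex ^ 'md \<Rightarrow> complex ^ 'n ^ 'md \<Rightarrow> real" where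
  "snr Ps sr2 sd2 Hsr Hrd W b r \<Delta> =
     Ps * (cmod (cinner r ((((Hrd + \<Delta>) ** W) ** Hsr) *v b)))\<^sup>2 /
     (sr2 * (norm (vcnj r v* ((Hrd + \<Delta>) ** W)))\<^sup>2 + sd2)"

definition robust_snr :: "real \<Rightarrow> real \<Rightarrow> real \<Rightarrow> real \<Rightarrow> complex ^ 'ms ^ 'n \<Rightarrow> complex ^ 'n ^ 'md
     \<Rightarrow> complex ^ 'n ^ 'n \<Rightarrow> complex ^ 'ms \<Rightarrow> complex ^ 'md \<Rightarrow> real" where
  "robust_snr Ps sr2 sd2 \<epsilon> Hsr Hrd W b r =
     Inf {snr Ps sr2 sd2 Hsr Hrd W b r \<Delta> | \<Delta>. norm \<Delta> \<le> \<epsilon>}"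

text \<open>Feasible set of problem P1 (the diagonal entries are real; we compare their real parts).\<close>
definition feasible1 :: "real \<Rightarrow> real \<Rightarrow> real \<Rightarrow> complex ^ 'ms ^ 'n
     \<Rightarrow> complex ^ 'n ^ 'n \<Rightarrow> complex ^ 'ms \<Rightarrow> complex ^ 'md \<Rightarrow> bool" where
  "feasible1 Ps Pr sr2 Hsr W b r \<longleftrightarrow>
     (\<forall>i. Re ((Ps *\<^sub>R (W ** Hsr ** outer b b ** ctrans Hsr ** ctrans W)
               + sr2 *\<^sub>R (W ** ctrans W)) $ i $ i) \<le> Pr)
     \<and> norm b = 1 \<and> norm r = 1"

definition fobj :: "real \<Rightarrow> complex ^ 'n ^ 'md \<Rightarrow> complex ^ 'n \<Rightarrow> real" where
  "fobj \<epsilon> Hrd w = norm (Hrd *v w) - \<epsilon> * norm w"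

end

theory Submission
  imports Defs
begin

(* Fix a feasible (W, b', r) and put u = H_sr b', x = W u. The per-antenna power constraint and
   Cauchy-Schwarz give |x_i| <= k = sqrt (P_r ||u||^2 / (P_s ||u||^2 + sigma_r^2)), so x / k is
   feasible for the relay problem and ||H_rd x|| - eps ||x|| <= k f (note f >= 0, as w = 0 is
   feasible). A rank-one error Delta aligned against r^H H_rd x brings |r^H (H_rd + Delta) x| down
   to max (||H_rd x|| - eps ||x||, 0), and Cauchy-Schwarz bounds the noise term below by this
   signal over ||u||. The resulting bound increases with ||u||^2, which is at most ||H_sr b||^2
   for the top eigenvector b. Conversely, for W proportional to w0 b^H H_sr^H and r along
   H_rd w0, every admissible error leaves |r^H (H_rd + Delta) w0| >= f, and the bound is met. *)

lemma power2_norm_vec: "(norm (x::'a::real_normed_vector ^ 'n))\<^sup>2 = (\<Sum>i\<in>UNIV. (norm (x $ i))\<^sup>2)"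
  unfolding norm_vec_def L2_set_def by (simp add: sum_nonneg)

lemma norm_sum_mult_le:
  fixes a b :: "'a::real_normed_algebra ^ 'n"
  shows "norm (\<Sum>j\<in>UNIV. a $ j * b $ j) \<le> norm a * norm b"
proof -
  have "norm (\<Sum>j\<in>UNIV. a $ j * b $ j) \<le> (\<Sum>j\<in>UNIV. \<bar>norm (a $ j)\<bar> * \<bar>norm (b $ j)\<bar>)"
    by (rule order_trans[OF norm_sum]) (simp add: sum_mono norm_mult_ineq)
  also have "\<dots> \<le> norm a * norm b"
    unfolding norm_vec_def by (rule L2_set_mult_ineq)
  finally show ?thesis .
qed

lemma norm_matrix_vector_mult_le:
  fixes M :: "'a::real_normed_algebra_1 ^ 'n ^ 'm"
  shows "norm (M *v x) \<le> norm M * norm x"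
proof -
  have "(norm ((M *v x) $ i))\<^sup>2 \<le> (norm (M $ i))\<^sup>2 * (norm x)\<^sup>2" for i
    using norm_sum_mult_le[of "M $ i" x]
    by (simp add: matrix_vector_mult_def power_mono flip: power_mult_distrib)
  then have "(norm (M *v x))\<^sup>2 \<le> (norm M * norm x)\<^sup>2"
    unfolding power2_norm_vec[of "M *v x"] power2_norm_vec[of M] power_mult_distrib
      sum_distrib_right
    by (rule sum_mono)
  then show ?thesis by (simp add: power2_le_iff_abs_le)
qed

lemma norm_vector_smult:
  fixes v :: "'a::real_normed_div_algebra ^ 'n"
  shows "norm (c *s v) = norm c * norm v"
proof -
  have "(norm (c *s v))\<^sup>2 = (norm c * norm v)\<^sup>2"
    by (simp add: power2_norm_vec norm_mult power_mult_distrib sum_distrib_left)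
  then show ?thesis by (simp add: power2_eq_iff_nonneg)
qed

lemma norm_vcnj [simp]: "norm (vcnj v) = norm v"
  by (simp add: vcnj_def norm_vec_def)

lemma vcnj_nth [simp]: "vcnj v $ i = cnj (v $ i)"
  by (simp add: vcnj_def)

lemma norm_cinner_le: "cmod (cinner r y) \<le> norm r * norm y"
  using norm_sum_mult_le[of "vcnj r" y] by (simp add: cinner_def)

lemma cinner_add_right: "cinner r (y + z) = cinner r y + cinner r z"
  by (simp add: cinner_def algebra_simps sum.distrib)

lemma cinner_smult_right: "cinner r (c *s y) = c * cinner r y"
  by (simp add: cinner_def sum_distrib_left mult_ac)

lemma cinner_scaleR_left: "cinner (a *\<^sub>R r) y = of_real a * cinner r y"
  by (simp add: cinner_def sum_distrib_left) (simp add: scaleR_conv_of_real mult_ac)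

lemma cinner_scaleR_right: "cinner r (a *\<^sub>R y) = of_real a * cinner r y"
  by (simp add: cinner_def sum_distrib_left) (simp add: scaleR_conv_of_real mult_ac)

lemma cinner_self: "cinner r r = of_real ((norm r)\<^sup>2)"
  by (simp add: cinner_def power2_norm_vec mult.commute flip: complex_norm_square)

lemma cinner_matrix_vector_mult: "cinner r (M *v y) = (\<Sum>j\<in>UNIV. (vcnj r v* M) $ j * y $ j)"
  unfolding cinner_def matrix_vector_mult_def vector_matrix_mult_def
  by (simp add: sum_distrib_left sum_distrib_right mult.assoc) (rule sum.swap)

lemma norm_cinner_matrix_vector_mult_le: "cmod (cinner r (M *v y)) \<le> norm (vcnj r v* M) * norm y"
  unfolding cinner_matrix_vector_mult by (rule norm_sum_mult_le)

lemma of_real_smult: "of_real a *s (v::complex ^ 'n) = a *\<^sub>R v"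
  by (simp add: vec_eq_iff) (simp add: scaleR_conv_of_real)

lemma matrix_vector_mult_scaleR_right:
  "(A::'a::real_algebra_1 ^ 'n ^ 'm) *v (c *\<^sub>R x) = c *\<^sub>R (A *v x)"
  using matrix_vector_mul_linear[of A] by (simp add: linear_iff)

lemma matrix_mult_outer: "A ** outer b c = outer (A *v b) c"
  by (simp add: outer_def matrix_matrix_mult_def matrix_vector_mult_def vec_eq_iff
      sum_distrib_right mult.assoc)

lemma outer_mult_ctrans: "outer x c ** ctrans Z = outer x (Z *v c)"
  by (simp add: outer_def ctrans_def matrix_matrix_mult_def matrix_vector_mult_def vec_eq_iff
      sum_distrib_left mult_ac)

lemma outer_scaleR_left: "outer (c *\<^sub>R x) y = c *\<^sub>R outer x y"
  by (simp add: outer_def vec_eq_iff)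

lemma outer_mult_vec: "outer x y *v z = cinner y z *s x"
  by (simp add: outer_def matrix_vector_mult_def cinner_def vec_eq_iff sum_distrib_left mult_ac)

lemma norm_outer_row: "norm (outer x y $ i) = cmod (x $ i) * norm y"
proof -
  have "(norm (outer x y $ i))\<^sup>2 = (cmod (x $ i) * norm y)\<^sup>2"
    by (simp add: power2_norm_vec outer_def norm_mult power_mult_distrib sum_distrib_left)
  then show ?thesis by (simp add: power2_eq_iff_nonneg)
qed

lemma norm_outer: "norm (outer x y) = norm x * norm y"
proof -
  have "(norm (outer x y))\<^sup>2 = (norm x * norm y)\<^sup>2"
    unfolding power2_norm_vec[of "outer x y"]
    by (simp add: norm_outer_row power_mult_distrib sum_distrib_right power2_norm_vec[of x])
  then show ?thesis by (simp add: power2_eq_iff_nonneg)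
qed

lemma norm_vcnj_mult_outer: "norm (vcnj r v* outer z u) = cmod (cinner r z) * norm u"
proof -
  have "vcnj r v* outer z u = (\<chi> j. cinner r z * cnj (u $ j))"
    by (simp add: vector_matrix_mult_def outer_def cinner_def vec_eq_iff sum_distrib_left mult_ac)
  moreover have "(norm (\<chi> j. cinner r z * cnj (u $ j)))\<^sup>2 = (cmod (cinner r z) * norm u)\<^sup>2"
    by (simp add: power2_norm_vec norm_mult power_mult_distrib sum_distrib_left)
  ultimately show ?thesis by (simp add: power2_eq_iff_nonneg)
qed

section \<open>Maximising the Rayleigh quotient\<close>

lemma inner_matrix_vector_mult: "inner ((M::complex ^ 'n ^ 'm) *v x) y = inner x (ctrans M *v y)"
proof -
  have "inner (a * b) c = inner b (cnj a * c)" for a b c :: complex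
    by (simp add: inner_complex_def algebra_simps)
  then show ?thesis
    unfolding inner_vec_def matrix_vector_mult_def ctrans_def
    by (simp add: inner_sum_left inner_sum_right) (rule sum.swap)
qed

lemma self_adjoint_psd_kernel:
  fixes f :: "'a::real_inner \<Rightarrow> 'a"
  assumes "linear f" and adjoint: "\<And>x y. inner x (f y) = inner (f x) y"
    and psd: "\<And>x. 0 \<le> inner x (f x)" and "inner u (f u) = 0"
  shows "f u = 0"
proof (rule ccontr)
  define d where "d = f u"
  define c where "c = inner d (f d)"
  assume "f u \<noteq> 0"
  then have d_pos: "0 < inner d d" by (simp add: d_def)
  have descent: "2 * inner d d \<le> t * c" if "0 < t" for t
  proof -
    have "0 \<le> inner (u - t *\<^sub>R d) (f (u - t *\<^sub>R d))" by (rule psd)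
    also have "\<dots> = t\<^sup>2 * c - 2 * t * inner d d"
      using \<open>linear f\<close> \<open>inner u (f u) = 0\<close> adjoint[of u d]
      by (simp add: linear_diff linear_scale inner_diff_left inner_diff_right inner_commute
          c_def d_def power2_eq_square algebra_simps)
    finally show ?thesis using that by (simp add: power2_eq_square)
  qed
  define t where "t = inner d d / (\<bar>c\<bar> + 1)"
  have "0 < t" using d_pos by (simp add: t_def add_pos_nonneg)
  then have "t * c \<le> t * \<bar>c\<bar>" by (simp add: mult_left_mono)
  also have "\<dots> < inner d d" using d_pos by (simp add: t_def field_simps)
  finally show False using descent[OF \<open>0 < t\<close>] d_pos by linarith
qed

lemma norm_mult_le_top_eigvec:
  fixes H :: "complex ^ 'n ^ 'm"
  assumes top: "is_top_eigvec (ctrans H ** H) b" and "norm b' = 1"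
  shows "norm (H *v b') \<le> norm (H *v b)"
proof -
  define A where "A = ctrans H ** H"
  have A_inner: "inner x (A *v y) = inner (H *v x) (H *v y)" for x y
    by (simp add: A_def inner_matrix_vector_mult flip: matrix_vector_mul_assoc)
  obtain lam where "norm b = 1" and b_eig: "A *v b = of_real lam *s b"
    and lam_max: "\<And>\<mu> v. v \<noteq> 0 \<Longrightarrow> A *v v = \<mu> *s v \<Longrightarrow> Re \<mu> \<le> lam"
    using top unfolding is_top_eigvec_def A_def by blast
  have "(norm (H *v b))\<^sup>2 = lam"
    using \<open>norm b = 1\<close>
    by (simp add: power2_norm_eq_inner flip: A_inner) (simp add: b_eig of_real_smult norm_eq_1)
  obtain u :: "complex ^ 'n" where "norm u = 1"
    and u_max: "\<And>z. norm z = 1 \<Longrightarrow> norm (H *v z) \<le> norm (H *v u)"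
    using continuous_attains_sup[of "sphere 0 1" "\<lambda>z. norm (H *v z)"] \<open>norm b = 1\<close>
    by (fastforce intro: continuous_intros)
  \<comment> \<open>The maximiser \<open>u\<close> makes \<open>\<mu> I - H\<^sup>H H\<close> positive semidefinite with \<open>u\<close> in its kernel.\<close>
  define \<mu> where "\<mu> = (norm (H *v u))\<^sup>2"
  have rayleigh_bound: "(norm (H *v z))\<^sup>2 \<le> \<mu> * (norm z)\<^sup>2" for z
  proof (cases "z = 0")
    case False
    have "norm (H *v (inverse (norm z) *\<^sub>R z)) \<le> norm (H *v u)"
      using False by (intro u_max) simp
    then have "norm (H *v z) \<le> norm (H *v u) * norm z"
      using False by (simp add: matrix_vector_mult_scaleR_right field_simps)
    then show ?thesis by (simp add: \<mu>_def power_mono flip: power_mult_distrib)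
  qed simp
  have "\<mu> *\<^sub>R u - A *v u = 0"
  proof (rule self_adjoint_psd_kernel[where f = "\<lambda>z. \<mu> *\<^sub>R z - A *v z"])
    show "linear (\<lambda>z. \<mu> *\<^sub>R z - A *v z)"
      by (simp add: linear_iff algebra_simps matrix_vector_mult_scaleR_right)
  qed (use rayleigh_bound \<open>norm u = 1\<close> in \<open>auto simp: inner_diff_right A_inner inner_commute
        power2_norm_eq_inner norm_eq_1 \<mu>_def\<close>)
  then have "A *v u = of_real \<mu> *s u" by (simp add: of_real_smult)
  then have "\<mu> \<le> lam" using lam_max[of u] \<open>norm u = 1\<close> by fastforce
  then have "norm (H *v u) \<le> norm (H *v b)"
    using \<open>(norm (H *v b))\<^sup>2 = lam\<close> by (simp add: \<mu>_def power2_le_imp_le)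
  then show ?thesis using u_max[OF \<open>norm b' = 1\<close>] by linarith
qed

section \<open>Worst-case channel error\<close>

lemma exists_worst_case_error:
  fixes H :: "complex ^ 'n ^ 'm"
  assumes "norm r = 1" and "0 \<le> \<epsilon>"
  shows "\<exists>\<Delta>. norm \<Delta> \<le> \<epsilon> \<and>
           cmod (cinner r ((H + \<Delta>) *v x)) \<le> max (norm (H *v x) - \<epsilon> * norm x) 0"
proof (cases "x = 0")
  case False
  \<comment> \<open>\<open>\<Delta> = c r x\<^sup>H\<close> shifts the signal by \<open>c \<parallel>x\<parallel>\<^sup>2\<close>; \<open>c\<close> opposes the phase of \<open>y\<close> and
    has the largest modulus allowed by \<open>\<parallel>\<Delta>\<parallel> \<le> \<epsilon>\<close>, capped so as not to overshoot \<open>0\<close>.\<close>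
  define y where "y = cinner r (H *v x)"
  define m where "m = min (\<epsilon> * norm x) (cmod y)"
  define c where "c = - of_real (m / (norm x)\<^sup>2) * sgn y"
  define \<Delta> where "\<Delta> = outer (c *s r) x"
  have "0 \<le> m" using assms by (simp add: m_def)
  have "norm \<Delta> = m * norm (sgn y) / norm x"
    using False \<open>0 \<le> m\<close> \<open>norm r = 1\<close>
    by (simp add: \<Delta>_def c_def norm_outer norm_vector_smult norm_mult norm_divide power2_eq_square)
  also have "\<dots> \<le> \<epsilon>"
    using False assms(2) by (simp add: norm_sgn m_def divide_le_eq)
  finally have "norm \<Delta> \<le> \<epsilon>" .
  have "cinner r ((H + \<Delta>) *v x) = y + of_real ((norm x)\<^sup>2) * c"
    using \<open>norm r = 1\<close>
    by (simp add: y_def \<Delta>_def matrix_vector_mult_add_rdistrib cinner_add_right outer_mult_vec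
        cinner_smult_right cinner_self mult.commute)
  also have "\<dots> = of_real (cmod y - m) * sgn y"
  proof -
    have "of_real ((norm x)\<^sup>2) * c = - of_real m * sgn y"
      using False by (simp add: c_def mult.assoc flip: of_real_mult)
    moreover have "y = of_real (cmod y) * sgn y"
      by (cases "y = 0") (simp_all add: sgn_eq)
    ultimately show ?thesis by (simp add: algebra_simps)
  qed
  finally have "cmod (cinner r ((H + \<Delta>) *v x)) \<le> cmod y - m"
    using \<open>0 \<le> m\<close> by (simp add: norm_mult norm_sgn m_def del: of_real_diff)
  also have "\<dots> \<le> max (norm (H *v x) - \<epsilon> * norm x) 0"
    using norm_cinner_le[of r "H *v x"] \<open>norm r = 1\<close> by (auto simp: y_def m_def)
  finally show ?thesis using \<open>norm \<Delta> \<le> \<epsilon>\<close> by blast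
qed (use assms in \<open>auto intro!: exI[of _ 0] simp: cinner_def\<close>)

lemma feasible1_iff:
  "feasible1 Ps Pr sr2 Hsr W b r \<longleftrightarrow>
     (\<forall>i. Ps * (cmod ((W *v (Hsr *v b)) $ i))\<^sup>2 + sr2 * (norm (W $ i))\<^sup>2 \<le> Pr)
     \<and> norm b = 1 \<and> norm r = 1"
proof -
  define x where "x = W *v (Hsr *v b)"
  have "W ** Hsr ** outer b b ** ctrans Hsr ** ctrans W = outer x x"
    by (simp add: x_def matrix_mult_outer outer_mult_ctrans matrix_vector_mul_assoc)
  moreover have "Re (outer x x $ i $ i) = (cmod (x $ i))\<^sup>2" for i
    by (simp add: outer_def flip: complex_norm_square)
  moreover have "Re ((W ** ctrans W) $ i $ i) = (norm (W $ i))\<^sup>2" for i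
    by (simp add: matrix_matrix_mult_def ctrans_def power2_norm_vec Re_sum
        flip: complex_norm_square)
  ultimately show ?thesis by (simp add: feasible1_def flip: x_def)
qed

lemma snr_eq:
  "snr Ps sr2 sd2 Hsr Hrd W b r \<Delta> =
     Ps * (cmod (cinner r ((Hrd + \<Delta>) *v (W *v (Hsr *v b)))))\<^sup>2 /
     (sr2 * (norm (vcnj r v* ((Hrd + \<Delta>) ** W)))\<^sup>2 + sd2)"
  by (simp add: snr_def matrix_vector_mul_assoc matrix_mul_assoc)

lemma snr_nonneg: "0 \<le> Ps \<Longrightarrow> 0 \<le> sr2 \<Longrightarrow> 0 < sd2 \<Longrightarrow> 0 \<le> snr Ps sr2 sd2 Hsr Hrd W b r \<Delta>"
  unfolding snr_def by (intro divide_nonneg_pos) (auto intro: add_nonneg_pos)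

lemma robust_snr_le_snr:
  assumes "0 \<le> Ps" "0 \<le> sr2" "0 < sd2" and "norm \<Delta> \<le> \<epsilon>"
  shows "robust_snr Ps sr2 sd2 \<epsilon> Hsr Hrd W b r \<le> snr Ps sr2 sd2 Hsr Hrd W b r \<Delta>"
  unfolding robust_snr_def
proof (rule cInf_lower)
  show "bdd_below {snr Ps sr2 sd2 Hsr Hrd W b r \<Delta> |\<Delta>. norm \<Delta> \<le> \<epsilon>}"
    by (rule bdd_belowI[of _ 0]) (use snr_nonneg[OF assms(1-3)] in auto)
qed (use assms(4) in blast)

lemma le_robust_snr:
  assumes "0 \<le> \<epsilon>" and "\<And>\<Delta>. norm \<Delta> \<le> \<epsilon> \<Longrightarrow> c \<le> snr Ps sr2 sd2 Hsr Hrd W b r \<Delta>"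
  shows "c \<le> robust_snr Ps sr2 sd2 \<epsilon> Hsr Hrd W b r"
  unfolding robust_snr_def
proof (rule cInf_greatest)
  show "{snr Ps sr2 sd2 Hsr Hrd W b r \<Delta> |\<Delta>. norm \<Delta> \<le> \<epsilon>} \<noteq> {}"
    using assms(1) by (auto intro: exI[of _ 0])
qed (use assms(2) in blast)

lemma fobj_scaleR: "fobj \<epsilon> H (c *\<^sub>R w) = \<bar>c\<bar> * fobj \<epsilon> H w"
  by (simp add: fobj_def matrix_vector_mult_scaleR_right algebra_simps)

lemma fobj_max_nonneg:
  assumes "\<forall>w. (\<forall>i. cmod (w $ i) \<le> 1) \<longrightarrow> fobj \<epsilon> H w \<le> fobj \<epsilon> H w0"
  shows "0 \<le> fobj \<epsilon> H w0"
  using assms[rule_format, of 0] by (simp add: fobj_def)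

lemma fobj_le_scaled_max:
  assumes "\<forall>w. (\<forall>i. cmod (w $ i) \<le> 1) \<longrightarrow> fobj \<epsilon> H w \<le> fobj \<epsilon> H w0"
    and "0 \<le> k" and "\<forall>i. cmod (x $ i) \<le> k"
  shows "fobj \<epsilon> H x \<le> k * fobj \<epsilon> H w0"
proof (cases "k = 0")
  case True
  then have "x = 0" using assms(3) by (simp add: vec_eq_iff)
  then show ?thesis using True by (simp add: fobj_def)
next
  case False
  then have "fobj \<epsilon> H (inverse k *\<^sub>R x) \<le> fobj \<epsilon> H w0"
    using assms by (simp add: field_simps)
  then show ?thesis
    using False \<open>0 \<le> k\<close> by (simp add: fobj_scaleR field_simps)
qed

lemma relay_output_bound:
  fixes W :: "complex ^ 'n ^ 'm"
  assumes "Ps * (cmod ((W *v u) $ i))\<^sup>2 + sr2 * (norm (W $ i))\<^sup>2 \<le> Pr" and "0 \<le> Ps" "0 < sr2"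
  shows "cmod ((W *v u) $ i) \<le> sqrt (Pr * (norm u)\<^sup>2 / (Ps * (norm u)\<^sup>2 + sr2))"
proof -
  have "(cmod ((W *v u) $ i))\<^sup>2 \<le> (norm (W $ i))\<^sup>2 * (norm u)\<^sup>2"
    using norm_sum_mult_le[of "W $ i" u]
    by (simp add: matrix_vector_mult_def power_mono flip: power_mult_distrib)
  then have "(cmod ((W *v u) $ i))\<^sup>2 * (Ps * (norm u)\<^sup>2 + sr2)
      \<le> (norm u)\<^sup>2 * (Ps * (cmod ((W *v u) $ i))\<^sup>2 + sr2 * (norm (W $ i))\<^sup>2)"
    using \<open>0 < sr2\<close> by (simp add: algebra_simps mult_left_mono)
  also have "\<dots> \<le> (norm u)\<^sup>2 * Pr"
    using assms(1) by (simp add: mult_left_mono)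
  finally show ?thesis
    using assms(2,3) by (simp add: real_le_rsqrt le_divide_eq add_nonneg_pos mult.commute)
qed

section \<open>The optimal SNR as a real function\<close>

(* h stands for the first-hop gain ||H_sr b||^2 and f for the optimal value of the relay
   problem; optimal_snr_altdef recovers the form with P_r~^2 = P_r / (P_s h + sigma_r^2). *)
definition optimal_snr :: "real \<Rightarrow> real \<Rightarrow> real \<Rightarrow> real \<Rightarrow> real \<Rightarrow> real \<Rightarrow> real" where
  "optimal_snr Ps Pr sr2 sd2 h f = Ps * Pr * h * f\<^sup>2 / (sr2 * Pr * f\<^sup>2 + sd2 * (Ps * h + sr2))"

lemma linear_fractional_mono:
  fixes a b c x y :: real
  assumes "0 \<le> a" "0 \<le> b" "0 < c" "0 \<le> x" "x \<le> y"
  shows "a * x / (b * x + c) \<le> a * y / (b * y + c)"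
proof -
  have "0 < b * x + c" "0 < b * y + c"
    using assms by (simp_all add: add_nonneg_pos)
  moreover have "a * x * (b * y + c) \<le> a * y * (b * x + c)"
    using assms by (simp add: algebra_simps mult_left_mono mult_right_mono)
  ultimately show ?thesis by (simp add: divide_simps)
qed

lemma optimal_snr_denominator_pos:
  fixes Ps Pr sr2 sd2 h f :: real
  assumes "0 < Ps" "0 < Pr" "0 < sr2" "0 < sd2" "0 \<le> h"
  shows "0 < sr2 * Pr * f\<^sup>2 + sd2 * (Ps * h + sr2)"
  by (intro add_nonneg_pos mult_pos_pos mult_nonneg_nonneg) (use assms in auto)

lemma optimal_snr_mono:
  fixes Ps Pr sr2 sd2 h h' f f' :: real
  assumes "0 < Ps" "0 < Pr" "0 < sr2" "0 < sd2" "0 \<le> h'" "h' \<le> h" "0 \<le> f'" "f' \<le> f"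
  shows "optimal_snr Ps Pr sr2 sd2 h' f' \<le> optimal_snr Ps Pr sr2 sd2 h f"
proof -
  have "optimal_snr Ps Pr sr2 sd2 h' f' =
      (Ps * Pr * h') * f'\<^sup>2 / ((sr2 * Pr) * f'\<^sup>2 + sd2 * (Ps * h' + sr2))"
    by (simp add: optimal_snr_def)
  also have "\<dots> \<le> (Ps * Pr * h') * f\<^sup>2 / ((sr2 * Pr) * f\<^sup>2 + sd2 * (Ps * h' + sr2))"
    using assms by (intro linear_fractional_mono power_mono mult_pos_pos add_nonneg_pos) simp_all
  also have "\<dots> = (Ps * Pr * f\<^sup>2) * h' / ((sd2 * Ps) * h' + (sr2 * Pr * f\<^sup>2 + sd2 * sr2))"
    by (simp add: algebra_simps)
  also have "\<dots> \<le> (Ps * Pr * f\<^sup>2) * h / ((sd2 * Ps) * h + (sr2 * Pr * f\<^sup>2 + sd2 * sr2))"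
    using assms by (intro linear_fractional_mono add_nonneg_pos) simp_all
  also have "\<dots> = optimal_snr Ps Pr sr2 sd2 h f"
    by (simp add: optimal_snr_def algebra_simps)
  finally show ?thesis .
qed

lemma optimal_snr_altdef:
  assumes "0 < Ps" "0 < sr2" "0 \<le> h"
  shows "optimal_snr Ps Pr sr2 sd2 h f =
    Pr / (Ps * h + sr2) * Ps * h * f\<^sup>2 / (Pr / (Ps * h + sr2) * sr2 * f\<^sup>2 + sd2)"
proof -
  define S where "S = Ps * h + sr2"
  have "0 < S" using assms by (simp add: S_def add_nonneg_pos)
  then have "Pr / S * sr2 * f\<^sup>2 + sd2 = (sr2 * Pr * f\<^sup>2 + sd2 * S) / S"
    by (simp add: field_simps)
  then show ?thesis
    unfolding optimal_snr_def S_def[symmetric] using \<open>0 < S\<close> by simp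
qed

lemma snr_le_optimal_snr:
  fixes Ps Pr sr2 sd2 nu t G f :: real
  assumes "0 < Ps" "0 < Pr" "0 < sr2" "0 < sd2" "0 \<le> nu" "0 \<le> t"
    and "t \<le> G * nu" and "t \<le> sqrt (Pr * nu\<^sup>2 / (Ps * nu\<^sup>2 + sr2)) * f"
  shows "Ps * t\<^sup>2 / (sr2 * G\<^sup>2 + sd2) \<le> optimal_snr Ps Pr sr2 sd2 (nu\<^sup>2) f"
proof -
  define h where "h = nu\<^sup>2"
  define D where "D = sr2 * G\<^sup>2 + sd2"
  define D' where "D' = sr2 * Pr * f\<^sup>2 + sd2 * (Ps * h + sr2)"
  have "0 < Ps * h + sr2" using assms by (simp add: h_def add_nonneg_pos)
  have "0 < D" using assms by (simp add: D_def add_nonneg_pos)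
  have "0 < D'" using optimal_snr_denominator_pos[OF assms(1-4)] by (simp add: D'_def h_def)
  have gain: "t\<^sup>2 \<le> G\<^sup>2 * h"
    using assms by (simp add: h_def power_mono flip: power_mult_distrib)
  have "t\<^sup>2 \<le> (sqrt (Pr * h / (Ps * h + sr2)) * f)\<^sup>2"
    using power_mono[OF assms(8,6), of 2] by (simp add: h_def)
  also have "\<dots> = Pr * h / (Ps * h + sr2) * f\<^sup>2"
    using assms \<open>0 < Ps * h + sr2\<close> by (simp add: h_def power_mult_distrib)
  finally have power: "t\<^sup>2 * (Ps * h + sr2) \<le> Pr * h * f\<^sup>2"
    using \<open>0 < Ps * h + sr2\<close> by (simp add: field_simps)
  have "t\<^sup>2 * D' = (sr2 * Pr * f\<^sup>2) * t\<^sup>2 + sd2 * (t\<^sup>2 * (Ps * h + sr2))"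
    by (simp add: D'_def algebra_simps)
  also have "\<dots> \<le> (sr2 * Pr * f\<^sup>2) * (G\<^sup>2 * h) + sd2 * (Pr * h * f\<^sup>2)"
    using assms gain power by (intro add_mono mult_left_mono) simp_all
  also have "\<dots> = Pr * h * f\<^sup>2 * D"
    by (simp add: D_def algebra_simps)
  finally have "Ps * t\<^sup>2 * D' \<le> Ps * Pr * h * f\<^sup>2 * D"
    using \<open>0 < Ps\<close> by (simp add: mult.assoc mult_left_mono)
  then show ?thesis
    unfolding optimal_snr_def h_def[symmetric] D_def[symmetric] D'_def[symmetric]
    using \<open>0 < D\<close> \<open>0 < D'\<close> by (simp add: divide_simps)
qed

lemma optimal_snr_rank_one:
  fixes Ps Pr sr2 sd2 nu s :: real
  assumes "0 < Ps" "0 \<le> Pr" "0 < sr2" "0 \<le> nu"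
  defines "c \<equiv> sqrt (Pr / (nu\<^sup>2 * (Ps * nu\<^sup>2 + sr2)))"
  shows "Ps * (c * nu\<^sup>2 * s)\<^sup>2 / (sr2 * (c * s * nu)\<^sup>2 + sd2) = optimal_snr Ps Pr sr2 sd2 (nu\<^sup>2) s"
proof (cases "nu = 0")
  case False
  define K where "K = Pr / (Ps * nu\<^sup>2 + sr2)"
  have "0 < Ps * nu\<^sup>2 + sr2" using assms by (simp add: add_nonneg_pos)
  then have "c\<^sup>2 * nu\<^sup>2 = K"
    using assms False by (simp add: c_def K_def)
  moreover have "Ps * (c * nu\<^sup>2 * s)\<^sup>2 = (c\<^sup>2 * nu\<^sup>2) * Ps * nu\<^sup>2 * s\<^sup>2"
    "sr2 * (c * s * nu)\<^sup>2 = (c\<^sup>2 * nu\<^sup>2) * sr2 * s\<^sup>2"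
    by (simp_all add: power2_eq_square mult_ac)
  ultimately show ?thesis
    using assms by (simp add: optimal_snr_altdef K_def)
qed (simp add: c_def optimal_snr_def)

section \<open>Optimality of the rank-one relay\<close>

lemma robust_snr_le_optimal_snr:
  fixes Hsr :: "complex ^ 'ms ^ 'n" and Hrd :: "complex ^ 'n ^ 'md"
  assumes "0 < Ps" "0 < Pr" "0 < sr2" "0 < sd2" "0 \<le> \<epsilon>"
    and w0_max: "\<forall>w. (\<forall>i. cmod (w $ i) \<le> 1) \<longrightarrow> fobj \<epsilon> Hrd w \<le> fobj \<epsilon> Hrd w0"
    and b_top: "is_top_eigvec (ctrans Hsr ** Hsr) b"
    and feasible: "feasible1 Ps Pr sr2 Hsr W b' r"
  shows "robust_snr Ps sr2 sd2 \<epsilon> Hsr Hrd W b' r \<le>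
    optimal_snr Ps Pr sr2 sd2 ((norm (Hsr *v b))\<^sup>2) (fobj \<epsilon> Hrd w0)"
proof -
  define u where "u = Hsr *v b'"
  define x where "x = W *v u"
  define k where "k = sqrt (Pr * (norm u)\<^sup>2 / (Ps * (norm u)\<^sup>2 + sr2))"
  define f where "f = fobj \<epsilon> Hrd w0"
  have "norm b' = 1" "norm r = 1"
    and power: "\<And>i. Ps * (cmod ((W *v u) $ i))\<^sup>2 + sr2 * (norm (W $ i))\<^sup>2 \<le> Pr"
    using feasible by (simp_all add: feasible1_iff u_def)
  have "0 \<le> f" using w0_max by (simp add: f_def fobj_max_nonneg)
  have "0 \<le> k" using assms by (simp add: k_def add_nonneg_pos)
  have "\<forall>i. cmod (x $ i) \<le> k"
    using relay_output_bound[OF power] assms by (simp add: k_def x_def)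
  then have max_le: "max (fobj \<epsilon> Hrd x) 0 \<le> k * f"
    using fobj_le_scaled_max[OF w0_max \<open>0 \<le> k\<close>] \<open>0 \<le> k\<close> \<open>0 \<le> f\<close> by (simp add: f_def)
  obtain \<Delta> where "norm \<Delta> \<le> \<epsilon>"
    and worst: "cmod (cinner r ((Hrd + \<Delta>) *v x)) \<le> max (fobj \<epsilon> Hrd x) 0"
    using exists_worst_case_error[OF \<open>norm r = 1\<close> \<open>0 \<le> \<epsilon>\<close>] unfolding fobj_def by blast
  define t where "t = cmod (cinner r ((Hrd + \<Delta>) *v x))"
  define G where "G = norm (vcnj r v* ((Hrd + \<Delta>) ** W))"
  have "t \<le> G * norm u"
    unfolding t_def G_def x_def matrix_vector_mul_assoc by (rule norm_cinner_matrix_vector_mult_le)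
  have "norm u \<le> norm (Hsr *v b)"
    using norm_mult_le_top_eigvec[OF b_top \<open>norm b' = 1\<close>] by (simp add: u_def)
  have "robust_snr Ps sr2 sd2 \<epsilon> Hsr Hrd W b' r \<le> snr Ps sr2 sd2 Hsr Hrd W b' r \<Delta>"
    using assms \<open>norm \<Delta> \<le> \<epsilon>\<close> by (intro robust_snr_le_snr) simp_all
  also have "\<dots> = Ps * t\<^sup>2 / (sr2 * G\<^sup>2 + sd2)"
    by (simp add: snr_eq t_def G_def x_def u_def)
  also have "\<dots> \<le> optimal_snr Ps Pr sr2 sd2 ((norm u)\<^sup>2) f"
    using assms \<open>t \<le> G * norm u\<close> order_trans[OF worst max_le]
    by (intro snr_le_optimal_snr) (simp_all add: t_def k_def mult.commute)
  also have "\<dots> \<le> optimal_snr Ps Pr sr2 sd2 ((norm (Hsr *v b))\<^sup>2) f"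
    using assms \<open>norm u \<le> _\<close> \<open>0 \<le> f\<close> by (intro optimal_snr_mono power_mono) simp_all
  finally show ?thesis by (simp add: f_def)
qed

lemma rank_one_relay_attains_optimal_snr:
  fixes Hsr :: "complex ^ 'ms ^ 'n" and Hrd :: "complex ^ 'n ^ 'md"
  assumes "0 < Ps" "0 < Pr" "0 < sr2" "0 < sd2" "0 \<le> \<epsilon>"
    and w0_feasible: "\<forall>i. cmod (w0 $ i) \<le> 1"
    and w0_max: "\<forall>w. (\<forall>i. cmod (w $ i) \<le> 1) \<longrightarrow> fobj \<epsilon> Hrd w \<le> fobj \<epsilon> Hrd w0"
    and b_top: "is_top_eigvec (ctrans Hsr ** Hsr) b"
    and "Hrd *v w0 \<noteq> 0"
  defines "W \<equiv> sqrt (Pr / ((norm (Hsr *v b))\<^sup>2 * (Ps * (norm (Hsr *v b))\<^sup>2 + sr2))) *\<^sub>R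
      (outer w0 b ** ctrans Hsr)"
    and "r \<equiv> (Hrd *v w0) /\<^sub>R norm (Hrd *v w0)"
  shows "feasible1 Ps Pr sr2 Hsr W b r \<and> robust_snr Ps sr2 sd2 \<epsilon> Hsr Hrd W b r =
    optimal_snr Ps Pr sr2 sd2 ((norm (Hsr *v b))\<^sup>2) (fobj \<epsilon> Hrd w0)"
proof -
  define u where "u = Hsr *v b"
  define h where "h = (norm u)\<^sup>2"
  define c where "c = sqrt (Pr / (h * (Ps * h + sr2)))"
  have "0 \<le> c" "0 \<le> h" "norm u * norm u = h"
    using assms by (simp_all add: c_def h_def power2_eq_square)
  have W_eq: "W = outer (c *\<^sub>R w0) u"
    by (simp add: W_def c_def h_def u_def outer_mult_ctrans outer_scaleR_left)
  have W_u: "W *v u = (c * h) *\<^sub>R w0"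
    by (simp add: W_eq outer_mult_vec cinner_self of_real_smult h_def u_def mult.commute
        del: of_real_power)
  have gain: "c\<^sup>2 * h * (Ps * h + sr2) \<le> Pr"
  proof (cases "h = 0")
    case False
    then show ?thesis using assms \<open>0 \<le> h\<close> by (simp add: c_def add_nonneg_pos)
  qed (use assms in simp)
  have "norm b = 1" using b_top by (simp add: is_top_eigvec_def)
  have "norm r = 1" using \<open>Hrd *v w0 \<noteq> 0\<close> by (simp add: r_def)
  have "Ps * (cmod ((W *v u) $ i))\<^sup>2 + sr2 * (norm (W $ i))\<^sup>2 \<le> Pr" for i
  proof -
    have "cmod ((W *v u) $ i) = c * h * cmod (w0 $ i)"
      using \<open>0 \<le> c\<close> \<open>0 \<le> h\<close> by (simp add: W_u norm_mult)
    moreover have "norm (W $ i) = c * cmod (w0 $ i) * norm u"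
      using \<open>0 \<le> c\<close> by (simp add: W_eq norm_outer_row norm_mult)
    ultimately have "Ps * (cmod ((W *v u) $ i))\<^sup>2 + sr2 * (norm (W $ i))\<^sup>2
        = (c\<^sup>2 * h * (Ps * h + sr2)) * (cmod (w0 $ i))\<^sup>2"
      using \<open>norm u * norm u = h\<close> by (simp add: power2_eq_square algebra_simps)
    also have "\<dots> \<le> Pr * 1"
      using gain w0_feasible assms by (intro mult_mono) (auto simp: power_le_one)
    finally show ?thesis by simp
  qed
  then have feasible: "feasible1 Ps Pr sr2 Hsr W b r"
    using \<open>norm b = 1\<close> \<open>norm r = 1\<close> by (simp add: feasible1_iff u_def)
  have "optimal_snr Ps Pr sr2 sd2 h (fobj \<epsilon> Hrd w0) \<le> snr Ps sr2 sd2 Hsr Hrd W b r \<Delta>"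
    if "norm \<Delta> \<le> \<epsilon>" for \<Delta>
  proof -
    define s where "s = cinner r ((Hrd + \<Delta>) *v w0)"
    have "cmod (cinner r (\<Delta> *v w0)) \<le> norm (\<Delta> *v w0)"
      using norm_cinner_le[of r "\<Delta> *v w0"] \<open>norm r = 1\<close> by simp
    also have "\<dots> \<le> norm \<Delta> * norm w0" by (rule norm_matrix_vector_mult_le)
    also have "\<dots> \<le> \<epsilon> * norm w0" using that by (simp add: mult_right_mono)
    finally have "cmod (cinner r (\<Delta> *v w0)) \<le> \<epsilon> * norm w0" .
    moreover have "cmod (cinner r (Hrd *v w0)) = norm (Hrd *v w0)"
      using \<open>Hrd *v w0 \<noteq> 0\<close>
      by (simp add: r_def cinner_scaleR_left cinner_self norm_mult norm_inverse power2_eq_square)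
    ultimately have "fobj \<epsilon> Hrd w0 \<le> cmod s"
      using norm_diff_ineq[of "cinner r (Hrd *v w0)" "cinner r (\<Delta> *v w0)"]
      by (simp add: s_def fobj_def matrix_vector_mult_add_rdistrib cinner_add_right)
    then have "optimal_snr Ps Pr sr2 sd2 h (fobj \<epsilon> Hrd w0) \<le> optimal_snr Ps Pr sr2 sd2 h (cmod s)"
      using assms \<open>0 \<le> h\<close> fobj_max_nonneg[OF w0_max] by (intro optimal_snr_mono) simp_all
    also have "\<dots> = Ps * (c * h * cmod s)\<^sup>2 / (sr2 * (c * cmod s * norm u)\<^sup>2 + sd2)"
      using assms optimal_snr_rank_one[of Ps Pr sr2 "norm u"] by (simp add: c_def h_def)
    also have "\<dots> = snr Ps sr2 sd2 Hsr Hrd W b r \<Delta>"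
    proof -
      have "cmod (cinner r ((Hrd + \<Delta>) *v (W *v u))) = c * h * cmod s"
        using \<open>0 \<le> c\<close> \<open>0 \<le> h\<close>
        by (simp add: W_u matrix_vector_mult_scaleR_right cinner_scaleR_right norm_mult s_def)
      moreover have "norm (vcnj r v* ((Hrd + \<Delta>) ** W)) = c * cmod s * norm u"
        using \<open>0 \<le> c\<close>
        by (simp add: W_eq matrix_mult_outer norm_vcnj_mult_outer matrix_vector_mult_scaleR_right
            cinner_scaleR_right norm_mult s_def)
      ultimately show ?thesis by (simp add: snr_eq flip: u_def)
    qed
    finally show ?thesis .
  qed
  then have "optimal_snr Ps Pr sr2 sd2 h (fobj \<epsilon> Hrd w0) \<le> robust_snr Ps sr2 sd2 \<epsilon> Hsr Hrd W b r"
    by (rule le_robust_snr[OF \<open>0 \<le> \<epsilon>\<close>])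
  moreover have
    "robust_snr Ps sr2 sd2 \<epsilon> Hsr Hrd W b r \<le> optimal_snr Ps Pr sr2 sd2 h (fobj \<epsilon> Hrd w0)"
    unfolding h_def u_def using assms(1-5) w0_max b_top feasible by (rule robust_snr_le_optimal_snr)
  ultimately show ?thesis using feasible by (simp add: h_def u_def)
qed

lemma robust_snr_zero_relay:
  assumes "0 \<le> \<epsilon>" "0 \<le> Ps" "0 \<le> sr2" "0 < sd2"
  shows "robust_snr Ps sr2 sd2 \<epsilon> Hsr Hrd 0 b r = 0"
proof -
  have silent: "snr Ps sr2 sd2 Hsr Hrd 0 b r \<Delta> = 0" for \<Delta>
    by (simp add: snr_def cinner_def)
  have "robust_snr Ps sr2 sd2 \<epsilon> Hsr Hrd 0 b r \<le> 0"
    using robust_snr_le_snr[of Ps sr2 sd2 0 \<epsilon> Hsr Hrd 0 b r] assms by (simp add: silent)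
  moreover have "0 \<le> robust_snr Ps sr2 sd2 \<epsilon> Hsr Hrd 0 b r"
    by (rule le_robust_snr[OF \<open>0 \<le> \<epsilon>\<close>]) (simp add: silent)
  ultimately show ?thesis by simp
qed

lemma optimal_snr_attained:
  fixes Hsr :: "complex ^ 'ms ^ 'n" and Hrd :: "complex ^ 'n ^ 'md"
  assumes "0 < Ps" "0 < Pr" "0 < sr2" "0 < sd2" "0 \<le> \<epsilon>"
    and w0_feasible: "\<forall>i. cmod (w0 $ i) \<le> 1"
    and w0_max: "\<forall>w. (\<forall>i. cmod (w $ i) \<le> 1) \<longrightarrow> fobj \<epsilon> Hrd w \<le> fobj \<epsilon> Hrd w0"
    and b_top: "is_top_eigvec (ctrans Hsr ** Hsr) b"
  shows "\<exists>W b' r. feasible1 Ps Pr sr2 Hsr W b' r \<and> robust_snr Ps sr2 sd2 \<epsilon> Hsr Hrd W b' r =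
    optimal_snr Ps Pr sr2 sd2 ((norm (Hsr *v b))\<^sup>2) (fobj \<epsilon> Hrd w0)"
proof (cases "Hrd *v w0 = 0")
  case True
  obtain r :: "complex ^ 'md" where "norm r = 1" using vector_choose_size[of 1] by auto
  then have "feasible1 Ps Pr sr2 Hsr 0 b r"
    using b_top assms by (simp add: feasible1_iff is_top_eigvec_def)
  moreover have "fobj \<epsilon> Hrd w0 \<le> 0" using True assms by (simp add: fobj_def)
  then have "fobj \<epsilon> Hrd w0 = 0" using fobj_max_nonneg[OF w0_max] by simp
  ultimately show ?thesis
    using robust_snr_zero_relay[of \<epsilon> Ps sr2 sd2] assms
    by (intro exI[of _ 0] exI[of _ b] exI[of _ r]) (simp add: optimal_snr_def)
next
  case False
  then show ?thesis using rank_one_relay_attains_optimal_snr[OF assms] by blast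
qed

theorem theorem1:
  fixes Ps Pr sr2 sd2 \<epsilon> :: real
    and Hsr :: "complex ^ 'ms ^ 'n" and Hrd :: "complex ^ 'n ^ 'md"
    and w0 :: "complex ^ 'n" and b :: "complex ^ 'ms"
  assumes "Ps > 0" "Pr > 0" "sr2 > 0" "sd2 > 0" "\<epsilon> \<ge> 0"
    and w0_feas: "\<forall>i. cmod (w0 $ i) \<le> 1"
    and w0_opt: "\<forall>w. (\<forall>i. cmod (w $ i) \<le> 1) \<longrightarrow> fobj \<epsilon> Hrd w \<le> fobj \<epsilon> Hrd w0"
    and b_def: "is_top_eigvec (ctrans Hsr ** Hsr) b"
  shows
    "let h2 = (norm (Hsr *v b))\<^sup>2;
         fo = fobj \<epsilon> Hrd w0;
         Pt = sqrt (Pr / (Ps * h2 + sr2));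
         SNR = Pt\<^sup>2 * Ps * h2 * (max fo 0)\<^sup>2 / (Pt\<^sup>2 * sr2 * (max fo 0)\<^sup>2 + sd2);
         W = sqrt (Pr / (h2 * (Ps * h2 + sr2))) *\<^sub>R (outer w0 b ** ctrans Hsr);
         r = (Hrd *v w0) /\<^sub>R norm (Hrd *v w0)
     in (\<forall>(W'::complex ^ 'n ^ 'n) (b'::complex ^ 'ms) (r'::complex ^ 'md).
           feasible1 Ps Pr sr2 Hsr W' b' r' \<longrightarrow> robust_snr Ps sr2 sd2 \<epsilon> Hsr Hrd W' b' r' \<le> SNR)
      \<and> (\<exists>(W'::complex ^ 'n ^ 'n) (b'::complex ^ 'ms) (r'::complex ^ 'md).
           feasible1 Ps Pr sr2 Hsr W' b' r' \<and> robust_snr Ps sr2 sd2 \<epsilon> Hsr Hrd W' b' r' = SNR)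
      \<and> (Hrd *v w0 \<noteq> 0 \<longrightarrow>
           feasible1 Ps Pr sr2 Hsr W b r \<and> robust_snr Ps sr2 sd2 \<epsilon> Hsr Hrd W b r = SNR)"
proof -
  define h where "h = (norm (Hsr *v b))\<^sup>2"
  define f where "f = fobj \<epsilon> Hrd w0"
  have "0 \<le> f" using w0_opt by (simp add: f_def fobj_max_nonneg)
  have SNR: "(sqrt (Pr / (Ps * h + sr2)))\<^sup>2 * Ps * h * (max f 0)\<^sup>2 /
      ((sqrt (Pr / (Ps * h + sr2)))\<^sup>2 * sr2 * (max f 0)\<^sup>2 + sd2) = optimal_snr Ps Pr sr2 sd2 h f"
    using assms \<open>0 \<le> f\<close> by (simp add: h_def optimal_snr_altdef add_nonneg_pos)
  show ?thesis
    unfolding Let_def h_def[symmetric] f_def[symmetric] SNR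
    using robust_snr_le_optimal_snr[OF assms(1-5) w0_opt b_def, folded h_def f_def]
      optimal_snr_attained[OF assms(1-5) w0_feas w0_opt b_def, folded h_def f_def]
      rank_one_relay_attains_optimal_snr[OF assms(1-5) w0_feas w0_opt b_def, folded h_def f_def]
    by blast
qed

end
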